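(* Let $K$ be a field of characteristic zero, and let $F,\ell\in K[X]$ satisfy $\deg(F)=d>1=\deg(\ell)$. Suppose that, for infinitely many $n>0$, there is a degree-one $\ell_n\in K[X]$ such that $F^n=(F\circ\ell)^n\circ\ell_n$. Then either (1) $F^k=(F\circ\ell)^k$ for some $k\in\mathbb{N}$; or (2) $F=v^{-1}\circ\epsilon X^d\circ v$ and $\ell=v^{-1}\circ\delta X\circ v$ for some degree-one $v\in K[X]$ and some $\epsilon,\delta\in K^*$.
   Context: $F^n$ denotes the $n$-th iterate of $F$ under composition $\circ$; $v^{-1}$ is the compositional inverse of the degree-one polynomial $v$. *)

theory Defs
  imports "HOL-Computational_Algebra.Polynomial"
begin

definition poly_iter :: "'a::comm_ring_1 poly \<Rightarrow> nat \<Rightarrow> 'a poly" where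
  "poly_iter F n = ((\<lambda>q. pcompose F q) ^^ n) [:0, 1:]"

definition poly_comp_inv :: "'a::field poly \<Rightarrow> 'a poly" where
  "poly_comp_inv v = [: - coeff v 0 / coeff v 1, 1 / coeff v 1 :]"

end

theory Submission
  imports Defs
begin

text \<open>
  Write \<open>G = F \<circ> \<ell>\<close>. Composition factors are rigid in characteristic zero: if
  \<open>A \<circ> P = B \<circ> Q\<close> with \<open>deg A = deg B\<close> and \<open>deg P = deg Q\<close>, then \<open>Q = \<mu> \<circ> P\<close> for a
  linear \<open>\<mu>\<close>. Applied to \<open>F\<^sup>n = G\<^sup>n \<circ> w\<close>, this yields linear \<open>\<tau>\<^sub>j\<close> with
  \<open>G\<^sup>j \<circ> w = \<tau>\<^sub>j \<circ> F\<^sup>j\<close> for \<open>j \<le> n\<close> and \<open>\<tau>\<^sub>n = X\<close>, hence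
  \<open>F \<circ> (\<ell> \<circ> \<tau>\<^sub>j) = \<tau>\<^sub>j\<^sub>+\<^sub>1 \<circ> F\<close>; and a coincidence \<open>\<tau>\<^sub>a = \<tau>\<^sub>b\<close> with \<open>a < b\<close> gives
  \<open>F\<^sup>b\<^sup>-\<^sup>a = G\<^sup>b\<^sup>-\<^sup>a\<close>.

  After conjugating by a translation, \<open>F\<close> has no \<open>X\<^sup>d\<^sup>-\<^sup>1\<close> term. Then a linear commutation
  \<open>F \<circ> \<sigma> = \<tau> \<circ> F\<close> forces \<open>\<sigma> = aX\<close> and \<open>\<tau> = a\<^sup>d X + F(0)(1 - a\<^sup>d)\<close>, where \<open>a\<^sup>d\<^sup>-\<^sup>i = 1\<close>
  whenever \<open>X\<^sup>i\<close> (\<open>0 < i < d\<close>) occurs in \<open>F\<close>. Moreover every \<open>\<tau>\<^sub>j\<close> maps \<open>0\<close> to the root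
  of \<open>\<ell>\<close>. If \<open>F(0) \<noteq> 0\<close> this pins down \<open>\<tau>\<^sub>1 = \<tau>\<^sub>2\<close>; if \<open>F(0) = 0\<close> and \<open>F\<close> is not a
  monomial, only finitely many \<open>a\<close> are possible, and for large \<open>n\<close> two \<open>\<tau>\<^sub>j\<close> coincide.
  Otherwise \<open>F = \<epsilon>X\<^sup>d\<close> and \<open>\<ell> = \<delta>X\<close>.
\<close>

section \<open>Iterates and conjugation by linear polynomials\<close>

lemma poly_iter_0 [simp]: "poly_iter F 0 = [:0, 1:]"
  by (simp add: poly_iter_def)

lemma poly_iter_Suc: "poly_iter F (Suc n) = F \<circ>\<^sub>p poly_iter F n"
  by (simp add: poly_iter_def)

lemma pcompose_idL [simp]: "[:0, 1:] \<circ>\<^sub>p p = (p :: 'a::comm_ring_1 poly)"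
  by (simp add: pcompose_pCons)

lemma poly_iter_add: "poly_iter F (m + n) = poly_iter F m \<circ>\<^sub>p poly_iter F n"
  by (induction m) (simp_all add: poly_iter_Suc pcompose_assoc)

lemma degree_poly_iter: "degree (poly_iter (F :: 'a::idom poly) n) = degree F ^ n"
  by (induction n) (simp_all add: poly_iter_Suc degree_pcompose)

lemma pcompose_cancel_right:
  fixes A B H :: "'a::idom poly"
  assumes "A \<circ>\<^sub>p H = B \<circ>\<^sub>p H" and "degree H > 0"
  shows "A = B"
  using pcompose_eq_0[of "A - B" H] assms by (simp add: pcompose_diff)

lemma pcompose_linear_linear [simp]: "[:a, b:] \<circ>\<^sub>p [:c, e:] = [:a + b * c, b * e:]"
  by (simp add: pcompose_pCons)

lemma coeff_linear_pcompose:
  "coeff ([:a, b:] \<circ>\<^sub>p F) j = (if j = 0 then a else 0) + b * coeff F j"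
  by (simp add: pcompose_pCons coeff_pCons split: nat.splits)

lemma
  fixes v :: "'a::field poly"
  assumes "degree v = 1"
  shows pcompose_poly_comp_inv_left: "poly_comp_inv v \<circ>\<^sub>p v = [:0, 1:]"
    and pcompose_poly_comp_inv_right: "v \<circ>\<^sub>p poly_comp_inv v = [:0, 1:]"
    and degree_poly_comp_inv: "degree (poly_comp_inv v) = 1"
    and poly_comp_inv_poly_comp_inv: "poly_comp_inv (poly_comp_inv v) = v"
proof -
  obtain a b where "v = [:b, a:]" and "a \<noteq> 0"
    using degree1_coeffs[OF assms] by blast
  then show "poly_comp_inv v \<circ>\<^sub>p v = [:0, 1:]" "v \<circ>\<^sub>p poly_comp_inv v = [:0, 1:]"
    "degree (poly_comp_inv v) = 1" "poly_comp_inv (poly_comp_inv v) = v"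
    by (simp_all add: poly_comp_inv_def field_simps)
qed

lemma pcompose_poly_comp_inv_cancel:
  assumes "degree v = 1"
  shows "poly_comp_inv v \<circ>\<^sub>p (v \<circ>\<^sub>p P) = P"
    and "v \<circ>\<^sub>p (poly_comp_inv v \<circ>\<^sub>p P) = P"
  using assms by (simp_all add: pcompose_assoc pcompose_poly_comp_inv_left pcompose_poly_comp_inv_right)

definition poly_conj :: "'a::field poly \<Rightarrow> 'a poly \<Rightarrow> 'a poly" where
  "poly_conj v P = poly_comp_inv v \<circ>\<^sub>p (P \<circ>\<^sub>p v)"

lemma degree_poly_conj: "degree v = 1 \<Longrightarrow> degree (poly_conj v P) = degree P"
  by (simp add: poly_conj_def degree_pcompose degree_poly_comp_inv)

lemma poly_conj_pcompose:
  "degree v = 1 \<Longrightarrow> poly_conj v (P \<circ>\<^sub>p Q) = poly_conj v P \<circ>\<^sub>p poly_conj v Q"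
  by (simp add: poly_conj_def pcompose_assoc pcompose_poly_comp_inv_cancel flip: pcompose_assoc)

lemma poly_iter_poly_conj:
  assumes "degree v = 1"
  shows "poly_iter (poly_conj v F) n = poly_conj v (poly_iter F n)"
proof (induction n)
  case 0
  then show ?case using assms by (simp add: poly_conj_def pcompose_poly_comp_inv_left)
next
  case (Suc n)
  then show ?case using assms by (simp add: poly_iter_Suc poly_conj_pcompose)
qed

lemma poly_conj_poly_comp_inv:
  "degree v = 1 \<Longrightarrow> poly_conj (poly_comp_inv v) (poly_conj v P) = P"
  by (simp add: poly_conj_def poly_comp_inv_poly_comp_inv pcompose_poly_comp_inv_cancel
      pcompose_poly_comp_inv_right flip: pcompose_assoc)

lemma poly_conj_inject: "degree v = 1 \<Longrightarrow> poly_conj v P = poly_conj v Q \<longleftrightarrow> P = Q"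
  by (metis poly_conj_poly_comp_inv)

definition right_linear_equiv :: "'a::comm_ring_1 poly \<Rightarrow> 'a poly \<Rightarrow> bool" where
  "right_linear_equiv P Q \<longleftrightarrow> (\<exists>\<mu>. degree \<mu> = 1 \<and> P = Q \<circ>\<^sub>p \<mu>)"

lemma right_linear_equiv_poly_conj:
  assumes "degree v = 1" "right_linear_equiv P Q"
  shows "right_linear_equiv (poly_conj v P) (poly_conj v Q)"
proof -
  obtain \<mu> where "degree \<mu> = 1" "P = Q \<circ>\<^sub>p \<mu>"
    using assms(2) by (auto simp: right_linear_equiv_def)
  then show ?thesis
    using assms(1) unfolding right_linear_equiv_def
    by (intro exI[of _ "poly_conj v \<mu>"]) (simp add: poly_conj_pcompose degree_poly_conj)
qed

lemma right_linear_equiv_poly_conj_iff: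
  "degree v = 1 \<Longrightarrow>
    right_linear_equiv (poly_conj v P) (poly_conj v Q) \<longleftrightarrow> right_linear_equiv P Q"
  by (metis right_linear_equiv_poly_conj degree_poly_comp_inv poly_conj_poly_comp_inv)

section \<open>Uniqueness of right composition factors\<close>

lemma pcompose_monom: "monom c i \<circ>\<^sub>p q = smult c (q ^ i)"
  by (induction i) (simp_all add: monom_Suc pcompose_pCons monom_0)

lemma pcompose_as_sum: "A \<circ>\<^sub>p P = (\<Sum>i\<le>degree A. smult (coeff A i) (P ^ i))"
proof -
  have "A \<circ>\<^sub>p P = (\<Sum>i\<le>degree A. monom (coeff A i) i) \<circ>\<^sub>p P"
    by (simp add: poly_as_sum_of_monoms)
  then show ?thesis
    by (simp add: pcompose_sum pcompose_monom)
qed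

definition pcompose_divided_diff :: "'a::comm_ring_1 poly \<Rightarrow> 'a poly \<Rightarrow> 'a poly \<Rightarrow> 'a poly" where
  "pcompose_divided_diff A P Q =
     (\<Sum>i\<le>degree A. smult (coeff A i) (\<Sum>t<i. Q ^ (i - Suc t) * P ^ t))"

lemma pcompose_diff_factor:
  "A \<circ>\<^sub>p P - A \<circ>\<^sub>p Q = (P - Q) * pcompose_divided_diff A P Q"
proof -
  have "A \<circ>\<^sub>p P - A \<circ>\<^sub>p Q = (\<Sum>i\<le>degree A. smult (coeff A i) (P ^ i - Q ^ i))"
    by (simp add: pcompose_as_sum sum_subtractf[symmetric] smult_diff_right)
  then show ?thesis
    by (simp add: power_diff_sumr2 pcompose_divided_diff_def sum_distrib_left)
qed

lemma geometric_sum_monic: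
  fixes P Q :: "'a::idom poly"
  assumes "lead_coeff P = 1" "lead_coeff Q = 1" "degree P = m" "degree Q = m" "i \<ge> 1"
  shows "degree (\<Sum>t<i. Q ^ (i - Suc t) * P ^ t) \<le> (i - 1) * m"
    and "coeff (\<Sum>t<i. Q ^ (i - Suc t) * P ^ t) ((i - 1) * m) = of_nat i"
proof -
  have nonzero: "P \<noteq> 0" "Q \<noteq> 0"
    using assms by auto
  have summand: "degree (Q ^ (i - Suc t) * P ^ t) = (i - 1) * m"
      "coeff (Q ^ (i - Suc t) * P ^ t) ((i - 1) * m) = 1" if "t < i" for t
  proof -
    have "(i - Suc t) * m + t * m = (i - 1) * m"
      using that by (simp flip: add_mult_distrib)
    then show deg: "degree (Q ^ (i - Suc t) * P ^ t) = (i - 1) * m"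
      using assms nonzero by (simp add: degree_mult_eq degree_power_eq)
    have "lead_coeff (Q ^ (i - Suc t) * P ^ t) = 1"
      using assms by (simp add: lead_coeff_mult lead_coeff_power)
    then show "coeff (Q ^ (i - Suc t) * P ^ t) ((i - 1) * m) = 1"
      by (simp only: deg)
  qed
  show "degree (\<Sum>t<i. Q ^ (i - Suc t) * P ^ t) \<le> (i - 1) * m"
    by (rule degree_sum_le) (use summand in auto)
  have "coeff (\<Sum>t<i. Q ^ (i - Suc t) * P ^ t) ((i - 1) * m) = (\<Sum>t<i. 1)"
    unfolding coeff_sum by (rule sum.cong) (use summand in auto)
  then show "coeff (\<Sum>t<i. Q ^ (i - Suc t) * P ^ t) ((i - 1) * m) = of_nat i"
    by simp
qed

lemma degree_pcompose_divided_diff: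
  fixes A P Q :: "'a::{idom,ring_char_0} poly"
  assumes "lead_coeff P = 1" "lead_coeff Q = 1" "degree P = m" "degree Q = m"
    and "m \<ge> 1" "degree A \<ge> 1"
  shows "degree (pcompose_divided_diff A P Q) = (degree A - 1) * m"
    and "pcompose_divided_diff A P Q \<noteq> 0"
proof -
  define k where "k = degree A"
  define S where "S i = (\<Sum>t<i. Q ^ (i - Suc t) * P ^ t)" for i
  note S = geometric_sum_monic[OF assms(1-4), folded S_def]
  have S_lt: "coeff (S i) ((k - 1) * m) = 0" if "i < k" for i
  proof (cases "i = 0")
    case False
    then have "degree (S i) \<le> (i - 1) * m"
      using S(1) by simp
    also have "\<dots> < (k - 1) * m"
      using that False assms(5) by simp
    finally show ?thesis
      by (simp add: coeff_eq_0)
  qed (simp add: S_def)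
  have "degree (smult (coeff A i) (S i)) \<le> (k - 1) * m" if "i \<le> k" for i
  proof (cases "i = 0")
    case False
    then have "degree (S i) \<le> (i - 1) * m"
      using S(1) by simp
    also have "\<dots> \<le> (k - 1) * m"
      using that by (intro mult_le_mono1) simp
    finally show ?thesis
      using degree_smult_le order_trans by blast
  qed (simp add: S_def)
  then have le: "degree (pcompose_divided_diff A P Q) \<le> (k - 1) * m"
    unfolding pcompose_divided_diff_def by (intro degree_sum_le) (auto simp: k_def S_def)
  have "coeff (pcompose_divided_diff A P Q) ((k - 1) * m) =
      (\<Sum>i<Suc k. coeff A i * coeff (S i) ((k - 1) * m))"
    by (simp add: pcompose_divided_diff_def coeff_sum k_def S_def lessThan_Suc_atMost)
  also have "\<dots> = coeff A k * of_nat k"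
    using S_lt S(2)[of k] assms(6) by (simp add: k_def)
  finally have "coeff (pcompose_divided_diff A P Q) ((k - 1) * m) \<noteq> 0"
    using assms(6) by (auto simp: k_def)
  then show "pcompose_divided_diff A P Q \<noteq> 0"
    and "degree (pcompose_divided_diff A P Q) = (degree A - 1) * m"
    using le le_degree by (auto simp: k_def intro: antisym)
qed

lemma pcompose_eq_imp_eq_normalized:
  fixes A B P Q :: "'a::{idom,ring_char_0} poly"
  assumes eq: "A \<circ>\<^sub>p P = B \<circ>\<^sub>p Q" and "degree A = degree B" "degree A \<ge> 1"
    and "degree P = degree Q" "lead_coeff P = 1" "lead_coeff Q = 1" "coeff P 0 = 0" "coeff Q 0 = 0"
  shows "P = Q"
proof (rule ccontr)
  assume "P \<noteq> Q"
  define m where "m = degree P"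
  have "m \<noteq> 0"
    using assms(5,7) by (metis m_def zero_neq_one)
  have "coeff (P - Q) m = 0" "coeff (P - Q) 0 = 0" "degree (P - Q) \<le> m"
    using assms(4-8) degree_diff_le[of P m Q] by (simp_all add: m_def)
  with \<open>P \<noteq> Q\<close> have deg_diff: "0 < degree (P - Q)" "degree (P - Q) < m"
    by (metis le_neq_implies_less leading_coeff_0_iff right_minus_eq neq0_conv)+
  have "(P - Q) * pcompose_divided_diff A P Q = (B - A) \<circ>\<^sub>p Q"
    using eq by (simp add: pcompose_diff flip: pcompose_diff_factor)
  then have "degree ((P - Q) * pcompose_divided_diff A P Q) = degree (B - A) * m"
    using assms(4) by (simp add: degree_pcompose m_def)
  moreover have "degree ((P - Q) * pcompose_divided_diff A P Q) =
      degree (P - Q) + (degree A - 1) * m"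
  proof -
    have "degree P = m" "degree Q = m" "m \<ge> 1"
      using assms(4) \<open>m \<noteq> 0\<close> by (simp_all add: m_def)
    note divided = degree_pcompose_divided_diff[OF assms(5,6) this assms(3)]
    show ?thesis
      using \<open>P \<noteq> Q\<close> by (simp add: degree_mult_eq divided)
  qed
  ultimately have "degree (P - Q) + (degree A - 1) * m = degree (B - A) * m"
    by simp
  \<comment> \<open>impossible, since \<open>0 < degree (P - Q) < m\<close>\<close>
  then have "degree (P - Q) mod m = 0"
    by (metis mod_mult_self1 mod_mult_self1_is_0 mult.commute)
  then show False
    using deg_diff by simp
qed

lemma monic_normalization:
  fixes P :: "'a::field poly"
  assumes "degree P \<ge> 1"
  obtains a c P1 where "c \<noteq> 0" "P = [:a, c:] \<circ>\<^sub>p P1" "degree P1 = degree P"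
    and "lead_coeff P1 = 1" "coeff P1 0 = 0"
proof
  define c where "c = lead_coeff P"
  define P1 where "P1 = smult (1 / c) (P - [:coeff P 0:])"
  show "c \<noteq> 0"
    using assms by (auto simp: c_def)
  have deg: "degree (P - [:coeff P 0:]) = degree P"
    using assms degree_add_eq_left[of "-[:coeff P 0:]" P] by (simp add: diff_conv_add_uminus)
  show "P = [:coeff P 0, c:] \<circ>\<^sub>p P1"
    using \<open>c \<noteq> 0\<close> by (simp add: pcompose_pCons P1_def)
  show "degree P1 = degree P"
    using \<open>c \<noteq> 0\<close> deg by (simp add: P1_def)
  show "lead_coeff P1 = 1"
    using \<open>c \<noteq> 0\<close> deg assms by (simp add: P1_def c_def coeff_pCons split: nat.splits)
  show "coeff P1 0 = 0"
    by (simp add: P1_def)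
qed

lemma pcompose_eq_imp_right_factors_linear:
  fixes A B P Q :: "'a::field_char_0 poly"
  assumes eq: "A \<circ>\<^sub>p P = B \<circ>\<^sub>p Q" and "degree A = degree B" "degree A \<ge> 1"
    and "degree P = degree Q" "degree P \<ge> 1"
  shows "\<exists>\<mu>. degree \<mu> = 1 \<and> Q = \<mu> \<circ>\<^sub>p P"
proof -
  obtain a c P1 where P: "c \<noteq> 0" "P = [:a, c:] \<circ>\<^sub>p P1" "degree P1 = degree P"
    "lead_coeff P1 = 1" "coeff P1 0 = 0"
    using monic_normalization[OF assms(5)] by blast
  have "degree Q \<ge> 1"
    using assms(4,5) by simp
  then obtain b e Q1 where Q: "e \<noteq> 0" "Q = [:b, e:] \<circ>\<^sub>p Q1" "degree Q1 = degree Q"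
    "lead_coeff Q1 = 1" "coeff Q1 0 = 0"
    by (rule monic_normalization)
  have "(A \<circ>\<^sub>p [:a, c:]) \<circ>\<^sub>p P1 = (B \<circ>\<^sub>p [:b, e:]) \<circ>\<^sub>p Q1"
    using eq unfolding P(2) Q(2) pcompose_assoc .
  then have "P1 = Q1"
    by (rule pcompose_eq_imp_eq_normalized)
      (use assms(2-4) P(1,3-5) Q(1,3-5) in \<open>simp_all add: degree_pcompose\<close>)
  then have "Q = ([:b, e:] \<circ>\<^sub>p [:- a / c, 1 / c:]) \<circ>\<^sub>p P"
    using P(1,2) Q(2) by (simp add: pcompose_assoc)
  moreover have "degree ([:b, e:] \<circ>\<^sub>p [:- a / c, 1 / c:]) = 1"
    using P(1) Q(1) by simp
  ultimately show ?thesis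
    by blast
qed

section \<open>Linear twists along the iterates\<close>

lemma twist_chain:
  fixes F G w :: "'a::field_char_0 poly"
  assumes "degree G = degree F" "degree F \<ge> 1" "degree w = 1"
    and "poly_iter F n = poly_iter G n \<circ>\<^sub>p w"
  obtains \<tau> where "\<tau> n = [:0, 1:]"
    and "\<And>j. j \<le> n \<Longrightarrow> degree (\<tau> j) = 1 \<and> poly_iter G j \<circ>\<^sub>p w = \<tau> j \<circ>\<^sub>p poly_iter F j"
proof -
  have "\<exists>\<mu>. degree \<mu> = 1 \<and> poly_iter G j \<circ>\<^sub>p w = \<mu> \<circ>\<^sub>p poly_iter F j" if "j \<le> n" for j
  proof (rule pcompose_eq_imp_right_factors_linear)
    show "poly_iter F (n - j) \<circ>\<^sub>p poly_iter F j = poly_iter G (n - j) \<circ>\<^sub>p (poly_iter G j \<circ>\<^sub>p w)"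
      using assms(4) that by (simp add: pcompose_assoc flip: poly_iter_add)
  qed (use assms(1-3) in \<open>simp_all add: degree_poly_iter degree_pcompose\<close>)
  then obtain \<tau> where \<tau>: "\<And>j. j \<le> n \<Longrightarrow> degree (\<tau> j) = 1 \<and> poly_iter G j \<circ>\<^sub>p w = \<tau> j \<circ>\<^sub>p poly_iter F j"
    by metis
  have "\<tau> n \<circ>\<^sub>p poly_iter F n = [:0, 1:] \<circ>\<^sub>p poly_iter F n"
    using \<tau>[of n] assms(4) by simp
  then have "\<tau> n = [:0, 1:]"
    by (rule pcompose_cancel_right) (use assms(2) in \<open>simp add: degree_poly_iter\<close>)
  with \<tau> show thesis
    using that by blast
qed

lemma twist_chain_step:
  fixes F G :: "'a::idom poly"
  assumes "degree F \<ge> 1"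
    and "poly_iter G j \<circ>\<^sub>p w = \<tau> j \<circ>\<^sub>p poly_iter F j"
    and "poly_iter G (Suc j) \<circ>\<^sub>p w = \<tau> (Suc j) \<circ>\<^sub>p poly_iter F (Suc j)"
  shows "G \<circ>\<^sub>p \<tau> j = \<tau> (Suc j) \<circ>\<^sub>p F"
proof (rule pcompose_cancel_right)
  show "(G \<circ>\<^sub>p \<tau> j) \<circ>\<^sub>p poly_iter F j = (\<tau> (Suc j) \<circ>\<^sub>p F) \<circ>\<^sub>p poly_iter F j"
    using assms(2,3) by (simp add: poly_iter_Suc pcompose_assoc flip: pcompose_assoc)
qed (use assms(1) in \<open>simp add: degree_poly_iter\<close>)

lemma twist_chain_repeat:
  fixes F G :: "'a::idom poly"
  assumes "degree F \<ge> 1"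
    and chain: "\<And>j. j \<le> n \<Longrightarrow> poly_iter G j \<circ>\<^sub>p w = \<tau> j \<circ>\<^sub>p poly_iter F j"
    and "\<tau> n = [:0, 1:]" "a < b" "b \<le> n" "\<tau> a = \<tau> b"
  shows "poly_iter F (b - a) = poly_iter G (b - a)"
proof -
  have shift: "poly_iter G t \<circ>\<^sub>p \<tau> j = \<tau> (t + j) \<circ>\<^sub>p poly_iter F t" if "t + j \<le> n" for t j
  proof (rule pcompose_cancel_right)
    have "(poly_iter G t \<circ>\<^sub>p \<tau> j) \<circ>\<^sub>p poly_iter F j = poly_iter G (t + j) \<circ>\<^sub>p w"
      using chain[of j] that by (simp add: poly_iter_add flip: pcompose_assoc)
    also have "\<dots> = (\<tau> (t + j) \<circ>\<^sub>p poly_iter F t) \<circ>\<^sub>p poly_iter F j"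
      using chain[of "t + j"] that by (simp add: poly_iter_add flip: pcompose_assoc)
    finally show "(poly_iter G t \<circ>\<^sub>p \<tau> j) \<circ>\<^sub>p poly_iter F j =
        (\<tau> (t + j) \<circ>\<^sub>p poly_iter F t) \<circ>\<^sub>p poly_iter F j" .
  qed (use assms(1) in \<open>simp add: degree_poly_iter\<close>)
  have "\<tau> (n - b + a) \<circ>\<^sub>p poly_iter F (n - b) = [:0, 1:] \<circ>\<^sub>p poly_iter F (n - b)"
    using shift[of "n - b" a] shift[of "n - b" b] assms(3-6) by simp
  then have "\<tau> (n - b + a) = [:0, 1:]"
    by (rule pcompose_cancel_right) (use assms(1) in \<open>simp add: degree_poly_iter\<close>)
  then show ?thesis
    using shift[of "b - a" "n - b + a"] assms(3-5) by simp
qed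

section \<open>Centred polynomials commuting with linear polynomials\<close>

lemma coeff_pcompose_linear_subleading:
  fixes F :: "'a::comm_ring_1 poly"
  assumes "degree F = Suc e"
  shows "coeff (F \<circ>\<^sub>p [:\<beta>, \<alpha>:]) e =
    coeff F e * \<alpha> ^ e + lead_coeff F * (of_nat (Suc e) * \<alpha> ^ e * \<beta>)"
proof -
  have "coeff ([:\<beta>, \<alpha>:] ^ i) e = 0" if "i < e" for i
    using degree_power_le[of "[:\<beta>, \<alpha>:]" i] that by (intro coeff_eq_0) (simp split: if_splits)
  then have "(\<Sum>i<e. coeff F i * coeff ([:\<beta>, \<alpha>:] ^ i) e) = 0"
    by simp
  moreover have "coeff (F \<circ>\<^sub>p [:\<beta>, \<alpha>:]) e =
      (\<Sum>i<e. coeff F i * coeff ([:\<beta>, \<alpha>:] ^ i) e)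
      + coeff F e * coeff ([:\<beta>, \<alpha>:] ^ e) e + coeff F (Suc e) * coeff ([:\<beta>, \<alpha>:] ^ Suc e) e"
    by (simp add: pcompose_as_sum coeff_sum assms flip: lessThan_Suc_atMost)
  moreover have "coeff ([:\<beta>, \<alpha>:] ^ e) e = \<alpha> ^ e"
    and "coeff ([:\<beta>, \<alpha>:] ^ Suc e) e = of_nat (Suc e) * \<alpha> ^ e * \<beta>"
    using coeff_linear_poly_power[of e e \<beta> \<alpha>] coeff_linear_poly_power[of e "Suc e" \<beta> \<alpha>]
    by simp_all
  ultimately show ?thesis
    using assms by (simp del: power_Suc)
qed

lemma centering_translation:
  fixes F :: "'a::field_char_0 poly"
  assumes "degree F \<ge> 2"
  obtains v where "degree v = 1" "coeff (poly_conj v F) (degree F - 1) = 0"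
proof
  define e where "e = degree F - 1"
  have e: "degree F = Suc e" "e \<noteq> 0"
    using assms by (simp_all add: e_def)
  define t where "t = - coeff F e / (of_nat (Suc e) * lead_coeff F)"
  have "lead_coeff F \<noteq> 0"
    using assms by auto
  then have "coeff F e + lead_coeff F * (of_nat (Suc e) * t) = 0"
    by (simp add: t_def field_simps del: of_nat_Suc)
  then show "coeff (poly_conj [:t, 1:] F) (degree F - 1) = 0"
    using e by (simp add: poly_conj_def poly_comp_inv_def coeff_linear_pcompose
        coeff_pcompose_linear_subleading)
qed simp

text \<open>These are the \<open>a\<close> for which \<open>F(aX) - a\<^sup>d F(X)\<close> is constant, \<open>d = deg F\<close>.\<close>

definition scaling_symmetries :: "'a::comm_ring_1 poly \<Rightarrow> 'a set" where
  "scaling_symmetries F =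
     {a. \<forall>i. 0 < i \<and> i < degree F \<and> coeff F i \<noteq> 0 \<longrightarrow> a ^ (degree F - i) = 1}"

lemma finite_scaling_symmetries:
  fixes F :: "'a::idom poly"
  assumes "0 < i" "i < degree F" "coeff F i \<noteq> 0"
  shows "finite (scaling_symmetries F)"
proof (rule finite_subset)
  show "scaling_symmetries F \<subseteq> {a. poly (monom 1 (degree F - i) - 1) a = 0}"
    using assms by (auto simp: scaling_symmetries_def poly_monom)
  have "coeff (monom 1 (degree F - i) - 1 :: 'a poly) (degree F - i) \<noteq> 0"
    using assms by simp
  then have "monom 1 (degree F - i) - 1 \<noteq> (0 :: 'a poly)"
    by (metis coeff_0)
  then show "finite {a. poly (monom 1 (degree F - i) - 1 :: 'a poly) a = 0}"
    by (rule poly_roots_finite)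
qed

lemma infinite_scaling_symmetries_imp_binomial:
  fixes F :: "'a::idom poly"
  assumes "infinite (scaling_symmetries F)" "degree F \<ge> 1"
  shows "F = monom (lead_coeff F) (degree F) + [:coeff F 0:]"
proof (rule poly_eqI)
  fix i
  have zero: "coeff F i = 0" if "0 < i" "i < degree F"
    using finite_scaling_symmetries[OF that] assms(1) by blast
  then show "coeff F i = coeff (monom (lead_coeff F) (degree F) + [:coeff F 0:]) i"
  proof (cases "0 < i \<and> i < degree F")
    case False
    then consider "i = 0" | "i = degree F" | "i > degree F"
      by linarith
    then show ?thesis
      using assms(2) by cases (auto simp: coeff_eq_0)
  qed (use zero in \<open>auto simp: coeff_pCons split: nat.splits\<close>)
qed

lemma centered_commute_linear:
  fixes F \<sigma> \<tau> :: "'a::field_char_0 poly"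
  assumes "degree F \<ge> 2" "coeff F (degree F - 1) = 0" "degree \<sigma> = 1" "degree \<tau> = 1"
    and comm: "F \<circ>\<^sub>p \<sigma> = \<tau> \<circ>\<^sub>p F"
  shows "\<exists>a\<in>scaling_symmetries F.
    \<sigma> = [:0, a:] \<and> \<tau> = [:coeff F 0 * (1 - a ^ degree F), a ^ degree F:]"
proof -
  define d where "d = degree F"
  define e where "e = d - 1"
  have e: "d = Suc e" "e \<noteq> 0"
    using assms(1) by (simp_all add: d_def e_def)
  obtain a b where \<sigma>: "\<sigma> = [:b, a:]" "a \<noteq> 0"
    using degree1_coeffs[OF assms(3)] by blast
  obtain m c where \<tau>: "\<tau> = [:c, m:]"
    using degree1_coeffs[OF assms(4)] by blast
  have coeff_comm: "coeff (F \<circ>\<^sub>p [:b, a:]) i = (if i = 0 then c else 0) + m * coeff F i" for i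
    using comm by (simp add: \<sigma> \<tau> coeff_linear_pcompose)
  have "lead_coeff F * (of_nat d * a ^ e * b) = 0"
    using coeff_comm[of e] coeff_pcompose_linear_subleading[of F e b a] assms(2) e
    by (simp add: d_def)
  then have "b = 0"
    using assms(1) \<sigma>(2) by (auto simp: d_def)
  then have scale: "a ^ i * coeff F i = (if i = 0 then c else 0) + m * coeff F i" for i
    using coeff_comm[of i] by (simp add: coeff_pcompose_linear)
  have "lead_coeff F \<noteq> 0"
    using assms(1) by auto
  moreover have "a ^ d * lead_coeff F = m * lead_coeff F"
    using scale[of d] e by (simp add: d_def)
  ultimately have m: "m = a ^ d"
    by simp
  have c: "c = coeff F 0 * (1 - a ^ d)"
    using scale[of 0] m by (simp add: algebra_simps)
  have "a ^ (d - i) = 1" if "0 < i" "i < d" "coeff F i \<noteq> 0" for i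
  proof -
    have "a ^ i * 1 = a ^ d"
      using scale[of i] that m by simp
    also have "\<dots> = a ^ i * a ^ (d - i)"
      using that by (simp flip: power_add)
    finally show ?thesis
      using \<sigma>(2) by simp
  qed
  then have "a \<in> scaling_symmetries F"
    by (simp add: scaling_symmetries_def d_def)
  with \<sigma> \<tau> \<open>b = 0\<close> m c show ?thesis
    by (auto simp: d_def)
qed

lemma twist_chain_collision:
  fixes l :: "'a::field poly" and \<tau> :: "nat \<Rightarrow> 'a poly"
  assumes "degree l = 1" "n \<ge> card E + 3"
    and shape: "\<And>j. j < n \<Longrightarrow>
      \<exists>a\<in>E. l \<circ>\<^sub>p \<tau> j = [:0, a:] \<and> \<tau> (Suc j) = [:f * (1 - a ^ d), a ^ d:]"
  shows "(\<exists>a b. a < b \<and> b \<le> n \<and> \<tau> a = \<tau> b) \<or> (f = 0 \<and> coeff l 0 = 0 \<and> infinite E)"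
proof -
  obtain p q where l: "l = [:q, p:]" "p \<noteq> 0"
    using degree1_coeffs[OF assms(1)] by blast
  have root: "q + p * coeff (\<tau> j) 0 = 0" if j: "j < n" for j
  proof -
    obtain a where "l \<circ>\<^sub>p \<tau> j = [:0, a:]"
      using shape[OF j] by blast
    then have "coeff (l \<circ>\<^sub>p \<tau> j) 0 = 0"
      by simp
    then show ?thesis
      by (simp add: l algebra_simps)
  qed
  have form: "\<exists>a\<in>E. \<tau> j = [:f * (1 - a ^ d), a ^ d:]" if "1 \<le> j" "j \<le> n" for j
  proof -
    have "j - 1 < n" "Suc (j - 1) = j"
      using that by simp_all
    then show ?thesis
      using shape[of "j - 1"] by metis
  qed
  show ?thesis
  proof (cases "f = 0")
    case False
    obtain a1 a2 where "\<tau> 1 = [:f * (1 - a1 ^ d), a1 ^ d:]" "\<tau> 2 = [:f * (1 - a2 ^ d), a2 ^ d:]"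
      using form[of 1] form[of 2] assms(2) by force
    moreover have "q + p * (f * (1 - a1 ^ d)) = q + p * (f * (1 - a2 ^ d))"
      using root[of 1] root[of 2] assms(2) calculation by simp
    ultimately have "\<tau> 1 = \<tau> 2"
      using l(2) False by simp
    then show ?thesis
      using assms(2) by (intro disjI1 exI[of _ 1] exI[of _ 2]) simp
  next
    case True
    have "q = 0"
      using root[of 1] form[of 1] True assms(2) by force
    show ?thesis
    proof (cases "finite E")
      case True
      have "\<tau> ` {1..n} \<subseteq> (\<lambda>a. [:0, a ^ d:]) ` E"
        using form \<open>f = 0\<close> by fastforce
      then have "card (\<tau> ` {1..n}) \<le> card E"
        using True by (meson card_image_le card_mono finite_imageI order_trans)
      then have "\<not> inj_on \<tau> {1..n}"
        using assms(2) by (intro pigeonhole) simp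
      then obtain a b where "a \<in> {1..n}" "b \<in> {1..n}" "a \<noteq> b" "\<tau> a = \<tau> b"
        by (auto simp: inj_on_def)
      then show ?thesis
        by (metis atLeastAtMost_iff linorder_neqE_nat)
    qed (use \<open>f = 0\<close> \<open>q = 0\<close> l in simp)
  qed
qed

lemma centered_twisted_iterates:
  fixes F l :: "'a::field_char_0 poly"
  assumes "degree F \<ge> 2" "coeff F (degree F - 1) = 0" "degree l = 1"
    and "infinite {n. right_linear_equiv (poly_iter F n) (poly_iter (F \<circ>\<^sub>p l) n)}"
  shows "(\<exists>k\<ge>1. poly_iter F k = poly_iter (F \<circ>\<^sub>p l) k) \<or>
    (\<exists>\<epsilon> \<delta>. \<epsilon> \<noteq> 0 \<and> \<delta> \<noteq> 0 \<and> F = monom \<epsilon> (degree F) \<and> l = monom \<delta> 1)"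
proof -
  define G where "G = F \<circ>\<^sub>p l"
  define E where "E = scaling_symmetries F"
  obtain n where n: "n \<ge> card E + 3"
    and "right_linear_equiv (poly_iter F n) (poly_iter G n)"
    using assms(4) unfolding infinite_nat_iff_unbounded_le G_def by blast
  then obtain w where "degree w = 1" "poly_iter F n = poly_iter G n \<circ>\<^sub>p w"
    by (auto simp: right_linear_equiv_def)
  moreover have "degree G = degree F"
    using assms(3) by (simp add: G_def degree_pcompose)
  ultimately obtain \<tau> where "\<tau> n = [:0, 1:]"
    and chain: "\<And>j. j \<le> n \<Longrightarrow> degree (\<tau> j) = 1 \<and> poly_iter G j \<circ>\<^sub>p w = \<tau> j \<circ>\<^sub>p poly_iter F j"
    using twist_chain[of G F w n] assms(1) by auto
  have "\<exists>a\<in>E. l \<circ>\<^sub>p \<tau> j = [:0, a:] \<and>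
      \<tau> (Suc j) = [:coeff F 0 * (1 - a ^ degree F), a ^ degree F:]" if "j < n" for j
  proof -
    have "F \<circ>\<^sub>p (l \<circ>\<^sub>p \<tau> j) = \<tau> (Suc j) \<circ>\<^sub>p F"
      using twist_chain_step[of F G j w \<tau>] chain[of j] chain[of "Suc j"] assms(1) that
      by (simp add: G_def pcompose_assoc)
    then show ?thesis
      unfolding E_def using centered_commute_linear[OF assms(1,2)] chain[of j] chain[of "Suc j"]
        assms(3) that by (simp add: degree_pcompose)
  qed
  from twist_chain_collision[where \<tau> = \<tau> and f = "coeff F 0" and d = "degree F",
      OF assms(3) n this]
  show ?thesis
  proof
    assume "\<exists>a b. a < b \<and> b \<le> n \<and> \<tau> a = \<tau> b"
    then obtain a b where "a < b" "b \<le> n" "\<tau> a = \<tau> b"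
      by blast
    then have "poly_iter F (b - a) = poly_iter G (b - a)"
      by (intro twist_chain_repeat[of F n G w \<tau>]) (use chain \<open>\<tau> n = [:0, 1:]\<close> assms(1) in auto)
    then show ?thesis
      using \<open>a < b\<close> by (auto simp: G_def)
  next
    assume degenerate: "coeff F 0 = 0 \<and> coeff l 0 = 0 \<and> infinite E"
    then have "F = monom (lead_coeff F) (degree F)"
      using infinite_scaling_symmetries_imp_binomial[of F] assms(1) by (simp add: E_def)
    moreover have "l = monom (coeff l 1) 1"
      using degree1_coeffs[OF assms(3)] degenerate
      by (metis coeff_pCons_0 coeff_pCons_Suc One_nat_def monom_Suc monom_0)
    moreover have "lead_coeff F \<noteq> 0"
      using assms(1) by auto
    moreover have "coeff l 1 \<noteq> 0"
      using assms(3) by (metis degree_0 leading_coeff_0_iff zero_neq_one)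
    ultimately show ?thesis
      by blast
  qed
qed

theorem proposition3p3:
  fixes F l :: "'a::field_char_0 poly" and d :: nat
  assumes "degree F = d" and "d > 1" and "degree l = 1"
    and "infinite {n::nat. n > 0 \<and> (\<exists>ln. degree ln = 1 \<and>
            poly_iter F n = pcompose (poly_iter (pcompose F l) n) ln)}"
  shows "(\<exists>k::nat. k \<ge> 1 \<and> poly_iter F k = poly_iter (pcompose F l) k)
       \<or> (\<exists>v \<epsilon> \<delta>. degree v = 1 \<and> \<epsilon> \<noteq> 0 \<and> \<delta> \<noteq> 0 \<and>
            F = pcompose (poly_comp_inv v) (pcompose (monom \<epsilon> d) v) \<and>
            l = pcompose (poly_comp_inv v) (pcompose (monom \<delta> 1) v))"
proof -
  obtain v where v: "degree v = 1" and centered: "coeff (poly_conj v F) (d - 1) = 0"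
    using centering_translation[of F] assms(1,2) by auto
  define F' l' where "F' = poly_conj v F" and "l' = poly_conj v l"
  have "infinite {n. right_linear_equiv (poly_iter F n) (poly_iter (F \<circ>\<^sub>p l) n)}"
    using assms(4) by (rule infinite_super[rotated]) (auto simp: right_linear_equiv_def)
  then have "infinite {n. right_linear_equiv (poly_iter F' n) (poly_iter (F' \<circ>\<^sub>p l') n)}"
    using v by (simp add: F'_def l'_def poly_iter_poly_conj right_linear_equiv_poly_conj_iff
        flip: poly_conj_pcompose)
  with centered_twisted_iterates[of F' l'] centered assms(1-3) v
  consider (iterates) k where "k \<ge> 1" "poly_iter F' k = poly_iter (F' \<circ>\<^sub>p l') k"
    | (monomial) \<epsilon> \<delta> where "\<epsilon> \<noteq> 0" "\<delta> \<noteq> 0" "F' = monom \<epsilon> d" "l' = monom \<delta> 1"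
    by (auto simp: F'_def l'_def degree_poly_conj)
  then show ?thesis
  proof cases
    case iterates
    then show ?thesis
      using v by (auto simp: F'_def l'_def poly_iter_poly_conj poly_conj_inject
          simp flip: poly_conj_pcompose)
  next
    case monomial
    then have "F = poly_conj (poly_comp_inv v) (monom \<epsilon> d)"
      and "l = poly_conj (poly_comp_inv v) (monom \<delta> 1)"
      using poly_conj_poly_comp_inv[OF v, of F] poly_conj_poly_comp_inv[OF v, of l]
      by (simp_all add: F'_def l'_def)
    then show ?thesis
      using monomial v unfolding poly_conj_def
      by (intro disjI2 exI[of _ "poly_comp_inv v"] exI[of _ \<epsilon>] exI[of _ \<delta>])
        (simp add: poly_comp_inv_poly_comp_inv degree_poly_comp_inv)
  qed
qed

end
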